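(* Let $A_1,\ldots,A_d$ be Hermitian $n\times n$ matrices and let $M_H\subset\mathbb C^{n}_z\times\mathbb C^{d}_w$ be the model quadric $$M_H=\{(z,w)\in\mathbb C^n\times\mathbb C^d:\ \Re e\, w_j={}^t\bar z A_j z,\ j=1,\ldots,d\}.$$ Then $M_H$ is of finite type at $0$ with Segre number $2$ at $0$ if and only if there exists $V\in\mathbb C^n$ such that the $n\times d$ matrix whose $j$-th column is $A_jV$ has rank $d$.
   Context: Segre sets (Baouendi–Ebenfelt–Rothschild) of a real-analytic generic submanifold $M\subset\mathbb C^N$ at $p\in M$: for $q$ near $p$ let $Q_q$ be the Segre variety of $q$ (obtained by complexifying the defining equations of $M$ and fixing the conjugate variables at $\bar q$); for $M_H$ this is $Q_{(z',w')}=\{(z,w): w_j=-\overline{w'_j}+2\,{}^t\overline{z'}A_jz,\ j=1,\dots,d\}$. Set $S_0(p)=\{p\}$ and $S_{k+1}(p)=\bigcup_{q\in S_k(p)}Q_q$; $S_k(p)$ is the image of a holomorphic Segre map $v^k$ defined on an open set of $\mathbb C^{nk}$ (here $n=\dim_{\mathbb C}$ of the CR tangent space), and $d_k(p)$ denotes the generic rank of $v^k$. $M$ is of finite type at $p$ iff $d_k(p)=N$ for some $k$, and the Segre number of $M$ at $p$ is the smallest such $k$. Here $N=n+d$. *)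

theory Defs
  imports "HOL-Analysis.Analysis"
begin

text \<open>The dimensions n = CARD('n), d = CARD('d) are finite index types (hence n, d >= 1).\<close>

definition hermitian :: "complex^'n^'n \<Rightarrow> bool" where
  "hermitian M \<longleftrightarrow> (\<forall>a b. M $ a $ b = cnj (M $ b $ a))"

definition model_quadric :: "('d::finite \<Rightarrow> complex^'n::finite^'n) \<Rightarrow> ((complex^'n) \<times> (complex^'d)) set" where
  "model_quadric A = {(z, w). \<forall>j. complex_of_real (Re (w $ j)) =
       (\<Sum>a\<in>UNIV. \<Sum>b\<in>UNIV. cnj (z $ a) * A j $ a $ b * z $ b)}"

definition cnj_vec :: "complex^'n \<Rightarrow> complex^'n" where
  "cnj_vec v = (\<chi> i. cnj (v $ i))"

definition cnj_pt :: "(complex^'n) \<times> (complex^'d) \<Rightarrow> (complex^'n) \<times> (complex^'d)" where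
  "cnj_pt q = (cnj_vec (fst q), cnj_vec (snd q))"

text \<open>Complexified defining map of M_H: for the conjugate variable zeta = (zeta_z, zeta_w),
  Z(x, zeta) = (x, w) with w_j = - zeta_w j + 2 (zeta_z)^t A_j x  (holomorphic in x and zeta).\<close>
definition segre_Z :: "('d::finite \<Rightarrow> complex^'n::finite^'n) \<Rightarrow> (complex^'n) \<times> (complex^'d)
                        \<Rightarrow> complex^'n \<Rightarrow> (complex^'n) \<times> (complex^'d)" where
  "segre_Z A \<zeta> x = (x, (\<chi> j. - (snd \<zeta> $ j)
        + 2 * (\<Sum>a\<in>UNIV. \<Sum>b\<in>UNIV. fst \<zeta> $ a * A j $ a $ b * x $ b)))"

text \<open>Segre variety Q_q = {(z,w) : w_j = - conj(w'_j) + 2 conj(z')^t A_j z}, q = (z', w').\<close>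
definition segre_variety :: "('d::finite \<Rightarrow> complex^'n::finite^'n) \<Rightarrow> (complex^'n) \<times> (complex^'d)
                              \<Rightarrow> ((complex^'n) \<times> (complex^'d)) set" where
  "segre_variety A q = range (segre_Z A (cnj_pt q))"

fun segre_set :: "('d::finite \<Rightarrow> complex^'n::finite^'n) \<Rightarrow> (complex^'n) \<times> (complex^'d) \<Rightarrow> nat
                   \<Rightarrow> ((complex^'n) \<times> (complex^'d)) set" where
  "segre_set A p 0 = {p}"
| "segre_set A p (Suc k) = (\<Union>q\<in>segre_set A p k. segre_variety A q)"

text \<open>Holomorphic Segre maps v^k (BER): v^0 = p,
  v^(k+1)(x_0,..,x_k) = Z(x_k, conj-coefficient v^k (x_0,..,x_(k-1))),
  where the conjugate-coefficient map is  X \<mapsto> conj (v^k (conj X)).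
  The variables are X 0, ..., X (k-1) :: complex^'n (only these are used), i.e. C^(nk).
  The image of v^k is exactly S_k(p).\<close>
fun segre_map :: "('d::finite \<Rightarrow> complex^'n::finite^'n) \<Rightarrow> (complex^'n) \<times> (complex^'d) \<Rightarrow> nat
                   \<Rightarrow> (nat \<Rightarrow> complex^'n) \<Rightarrow> (complex^'n) \<times> (complex^'d)" where
  "segre_map A p 0 X = p"
| "segre_map A p (Suc k) X =
     segre_Z A (cnj_pt (segre_map A p k (\<lambda>i. cnj_vec (X i)))) (X k)"

definition flat_pt :: "(complex^'n) \<times> (complex^'d) \<Rightarrow> complex^('n + 'd)" where
  "flat_pt q = (\<chi> c. case c of Inl a \<Rightarrow> fst q $ a | Inr b \<Rightarrow> snd q $ b)"

definition segre_partial :: "('d::finite \<Rightarrow> complex^'n::finite^'n) \<Rightarrow> (complex^'n) \<times> (complex^'d) \<Rightarrow> nat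
                   \<Rightarrow> (nat \<Rightarrow> complex^'n) \<Rightarrow> nat \<Rightarrow> 'n \<Rightarrow> complex^('n + 'd)" where
  "segre_partial A p k X i l =
     (\<chi> c. deriv (\<lambda>t. flat_pt (segre_map A p k (X(i := X i + t *s axis l 1))) $ c) 0)"

definition segre_jac_rank :: "('d::finite \<Rightarrow> complex^'n::finite^'n) \<Rightarrow> (complex^'n) \<times> (complex^'d) \<Rightarrow> nat
                   \<Rightarrow> (nat \<Rightarrow> complex^'n) \<Rightarrow> nat" where
  "segre_jac_rank A p k X = vec.dim {segre_partial A p k X i l | i l. i < k}"

text \<open>Generic rank d_k(p) of v^k (maximal rank of its Jacobian; v^k is polynomial,
  defined on all of C^(nk)).\<close>
definition segre_rank :: "('d::finite \<Rightarrow> complex^'n::finite^'n) \<Rightarrow> (complex^'n) \<times> (complex^'d) \<Rightarrow> nat \<Rightarrow> nat" where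
  "segre_rank A p k = Max (range (segre_jac_rank A p k))"

definition finite_type_at :: "('d::finite \<Rightarrow> complex^'n::finite^'n) \<Rightarrow> (complex^'n) \<times> (complex^'d) \<Rightarrow> bool" where
  "finite_type_at A p \<longleftrightarrow> (\<exists>k. segre_rank A p k = CARD('n) + CARD('d))"

definition segre_number :: "('d::finite \<Rightarrow> complex^'n::finite^'n) \<Rightarrow> (complex^'n) \<times> (complex^'d) \<Rightarrow> nat" where
  "segre_number A p = (LEAST k. segre_rank A p k = CARD('n) + CARD('d))"

end

theory Submission
  imports Defs
begin

text \<open>At the origin the Segre maps are v^1(x_0) = (x_0, 0) and
  v^2(x_0, x_1) = (x_1, 2 x_0^t M(x_1)), where M(V) is the n x d matrix with columns A_j V.
  The image of v^1 lies in {w = 0}, so d_0(0) and d_1(0) are less than N. The Jacobian of v^2 at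
  (x_0, x_1) has the columns (0, 2 row_l M(x_1)) and (e_l, *); after a shear of C^n x C^d that
  clears the entries *, it has rank N exactly when the rows of M(x_1) span C^d, i.e. when
  M(x_1) has rank d.\<close>

lemma card_sum_type: "CARD('a::finite + 'b::finite) = CARD('a) + CARD('b)"
  by (simp add: UNIV_Plus_UNIV[symmetric] card_Plus del: UNIV_Plus_UNIV)

lemma vec_dim_eq_card_iff_span_UNIV:
  fixes S :: "('a::field^'n::finite) set"
  shows "vec.dim S = CARD('n) \<longleftrightarrow> vec.span S = UNIV"
  using vec.dim_eq_full[of S] by (simp add: vec.dimension_def card_cart_basis)

lemma rank_eq_ncols_iff:
  fixes M :: "'a::field^'d::finite^'n::finite"
  shows "rank M = CARD('d) \<longleftrightarrow> vec.span (rows M) = UNIV"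
  unfolding row_rank_def_gen by (rule vec_dim_eq_card_iff_span_UNIV)

lemma rows_eq_range_row: "rows M = range (\<lambda>l. row l M)"
  by (auto simp: rows_def)

lemma span_range_scale:
  fixes f :: "'i::finite \<Rightarrow> 'a::field^'n::finite"
  assumes "c \<noteq> 0"
  shows "vec.span (range (\<lambda>l. c *s f l)) = vec.span (range f)"
  using vec.span_image_scale[of "range f" "\<lambda>_. c"] assms by (simp add: image_image)

lemma axis_vector_matrix_mult: "axis l 1 v* M = row l M"
  by (simp add: vec_eq_iff vector_matrix_mult_def row_def axis_def
      if_distrib[of "\<lambda>c. c * _"] cong: if_cong)

lemma sum_axis_scale: "(\<Sum>a\<in>UNIV. axis l 1 $ a *s f a) = (f l :: 'a::comm_ring_1^'n)"
  by (simp add: axis_def if_distrib[of "\<lambda>c. c *s _"] cong: if_cong)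

lemma Max_range_eq_bound_iff:
  fixes f :: "'a \<Rightarrow> nat"
  assumes bound: "\<And>x. f x \<le> b"
  shows "Max (range f) = b \<longleftrightarrow> (\<exists>x. f x = b)"
proof -
  have fin: "finite (range f)"
    by (rule finite_subset[of _ "{..b}"]) (auto simp: bound)
  show ?thesis
    using Max_in[OF fin] Max_ge[OF fin] bound
    by (metis UNIV_not_empty image_is_empty le_antisym rangeE rangeI)
qed

lemma flat_pt_Inl [simp]: "flat_pt q $ Inl a = fst q $ a"
  by (simp add: flat_pt_def)

lemma flat_pt_Inr [simp]: "flat_pt q $ Inr b = snd q $ b"
  by (simp add: flat_pt_def)

lemma flat_pt_add: "flat_pt (x, y) + flat_pt (x', y') = flat_pt (x + x', y + y')"
  by (simp add: vec_eq_iff flat_pt_def split: sum.split)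

lemma flat_pt_diff: "flat_pt (x, y) - flat_pt (x', y') = flat_pt (x - x', y - y')"
  by (simp add: vec_eq_iff flat_pt_def split: sum.split)

lemma flat_pt_split: "flat_pt (x, y) = flat_pt (x, 0) + flat_pt (0, y)"
  by (simp add: flat_pt_add)

lemma flat_pt_surj: "v = flat_pt (\<chi> a. v $ Inl a, \<chi> b. v $ Inr b)"
  by (simp add: vec_eq_iff flat_pt_def split: sum.split)

lemma linear_flat_pt_fst: "Vector_Spaces.linear (*s) (*s) (\<lambda>x. flat_pt (x, 0))"
  by unfold_locales (simp_all add: vec_eq_iff flat_pt_def split: sum.split)

lemma linear_flat_pt_snd: "Vector_Spaces.linear (*s) (*s) (\<lambda>y. flat_pt (0, y))"
  by unfold_locales (simp_all add: vec_eq_iff flat_pt_def split: sum.split)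

lemma span_shear_eq_UNIV_iff:
  fixes r w :: "'n::finite \<Rightarrow> complex^'d::finite"
  shows "vec.span (range (\<lambda>l. flat_pt (0, r l)) \<union> range (\<lambda>l. flat_pt (axis l 1, w l))) = UNIV
    \<longleftrightarrow> vec.span (range r) = UNIV"
  (is "vec.span ?S = UNIV \<longleftrightarrow> _")
proof
  assume full: "vec.span ?S = UNIV"
  define \<rho> :: "complex^('n + 'd) \<Rightarrow> complex^'d"
    where "\<rho> v = (\<chi> b. v $ Inr b) - (\<Sum>a\<in>UNIV. v $ Inl a *s w a)" for v
  have lin: "Vector_Spaces.linear (*s) (*s) \<rho>"
    by unfold_locales
      (simp_all add: \<rho>_def vec_eq_iff algebra_simps sum.distrib sum_distrib_left)
  have "\<rho> ` ?S \<subseteq> insert 0 (range r)"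
    by (auto simp: \<rho>_def sum_axis_scale)
  then have image_span: "\<rho> ` vec.span ?S \<subseteq> vec.span (range r)"
    unfolding vec.linear_span_image[OF lin, symmetric]
    using vec.span_mono vec.span_insert_0 by blast
  have "y \<in> vec.span (range r)" for y
  proof -
    have "\<rho> (flat_pt (0, y)) = y"
      by (simp add: \<rho>_def)
    then have "y \<in> \<rho> ` vec.span ?S"
      using full by (metis UNIV_I image_eqI)
    then show ?thesis
      using image_span by blast
  qed
  then show "vec.span (range r) = UNIV"
    by auto
next
  assume full: "vec.span (range r) = UNIV"
  have snd_in: "flat_pt (0, y) \<in> vec.span ?S" for y
  proof -
    have "(\<lambda>y. flat_pt (0, y)) ` vec.span (range r) \<subseteq> vec.span ?S"
      unfolding vec.linear_span_image[OF linear_flat_pt_snd, symmetric]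
      by (rule vec.span_mono) auto
    then show ?thesis
      using full by blast
  qed
  have "flat_pt (axis l 1, 0) \<in> vec.span ?S" for l
  proof -
    have "flat_pt (axis l 1, w l) \<in> vec.span ?S"
      by (intro vec.span_base) auto
    then have "flat_pt (axis l 1, w l) - flat_pt (0, w l) \<in> vec.span ?S"
      using snd_in by (rule vec.span_diff)
    then show ?thesis
      by (simp add: flat_pt_diff)
  qed
  then have "(\<lambda>x. flat_pt (x, 0)) ` vec.span cart_basis \<subseteq> vec.span ?S"
    unfolding vec.linear_span_image[OF linear_flat_pt_fst, symmetric]
    by (intro vec.span_minimal) (auto simp: cart_basis_def)
  then have fst_in: "flat_pt (x, 0) \<in> vec.span ?S" for x
    by auto
  show "vec.span ?S = UNIV"
  proof (intro set_eqI iffI UNIV_I)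
    fix v
    show "v \<in> vec.span ?S"
      by (subst flat_pt_surj, subst flat_pt_split) (intro vec.span_add fst_in snd_in)
  qed
qed

lemma segre_jac_rank_le:
  fixes A :: "'d::finite \<Rightarrow> complex^'n::finite^'n"
  shows "segre_jac_rank A p k X \<le> CARD('n) + CARD('d)"
  unfolding segre_jac_rank_def card_sum_type[symmetric] by (rule dim_subset_UNIV_cart_gen)

lemma segre_rank_eq_full_iff:
  fixes A :: "'d::finite \<Rightarrow> complex^'n::finite^'n"
  shows "segre_rank A p k = CARD('n) + CARD('d) \<longleftrightarrow>
    (\<exists>X. vec.span {segre_partial A p k X i l | i l. i < k} = UNIV)"
  unfolding segre_rank_def Max_range_eq_bound_iff[OF segre_jac_rank_le]
  unfolding segre_jac_rank_def card_sum_type[symmetric] vec_dim_eq_card_iff_span_UNIV ..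

lemma finite_type_segre_number_eq_iff:
  fixes A :: "'d::finite \<Rightarrow> complex^'n::finite^'n"
  shows "finite_type_at A p \<and> segre_number A p = k \<longleftrightarrow>
    segre_rank A p k = CARD('n) + CARD('d) \<and> (\<forall>j<k. segre_rank A p j \<noteq> CARD('n) + CARD('d))"
  unfolding finite_type_at_def segre_number_def
  by (metis (mono_tags, lifting) LeastI_ex Least_equality not_less_Least not_le)

lemma segre_rank_0_ne_full:
  fixes A :: "'d::finite \<Rightarrow> complex^'n::finite^'n"
  shows "segre_rank A p 0 \<noteq> CARD('n) + CARD('d)"
proof -
  have "axis (Inr undefined) 1 \<notin> vec.span ({} :: (complex^('n + 'd)) set)"
    by simp
  then show ?thesis
    unfolding segre_rank_eq_full_iff by auto
qed

lemma segre_partial_eqI: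
  assumes "\<And>t. segre_map A p k (X(i := X i + t *s axis l 1)) = (x + t *s x', y + t *s y')"
  shows "segre_partial A p k X i l = flat_pt (x', y')"
proof -
  have "deriv (\<lambda>t. flat_pt (segre_map A p k (X(i := X i + t *s axis l 1))) $ c) 0 =
      flat_pt (x', y') $ c" for c
  proof -
    have "flat_pt (segre_map A p k (X(i := X i + t *s axis l 1))) $ c =
        flat_pt (x, y) $ c + t * flat_pt (x', y') $ c" for t
      unfolding assms by (cases c) simp_all
    then show ?thesis
      by simp (rule DERIV_imp_deriv, auto intro!: derivative_eq_intros)
  qed
  then show ?thesis
    by (simp add: segre_partial_def vec_eq_iff)
qed

definition column_matrix ::
    "('d::finite \<Rightarrow> complex^'n::finite^'n) \<Rightarrow> complex^'n \<Rightarrow> complex^'d^'n" where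
  "column_matrix A V = (\<chi> a. \<chi> j. (A j *v V) $ a)"

lemma linear_vector_column_matrix: "Vector_Spaces.linear (*s) (*s) (\<lambda>V. x v* column_matrix A V)"
  by unfold_locales
    (simp_all add: vec_eq_iff vector_matrix_mult_def column_matrix_def matrix_vector_mult_def
      algebra_simps sum.distrib sum_distrib_left)

lemma cnj_pt_0 [simp]: "cnj_pt 0 = 0"
  by (simp add: cnj_pt_def cnj_vec_def vec_eq_iff zero_prod_def)

lemma segre_map_origin_1: "segre_map A 0 1 X = (X 0, 0)"
  by (simp add: segre_Z_def vec_eq_iff)

lemma segre_map_origin_2: "segre_map A 0 2 X = (X 1, 2 *s (X 0 v* column_matrix A (X 1)))"
  by (simp add: numeral_2_eq_2 segre_map_origin_1 segre_Z_def cnj_pt_def cnj_vec_def vec_eq_iff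
      column_matrix_def vector_matrix_mult_def matrix_vector_mult_def sum_distrib_left mult.assoc)

lemma segre_partial_origin_1: "segre_partial A 0 1 X 0 l = flat_pt (axis l 1, 0)"
  by (rule segre_partial_eqI[where x = "X 0" and y = 0]) (simp add: segre_Z_def vec_eq_iff)

lemma segre_rank_origin_1_ne_full:
  fixes A :: "'d::finite \<Rightarrow> complex^'n::finite^'n"
  shows "segre_rank A 0 1 \<noteq> CARD('n) + CARD('d)"
proof -
  let ?H = "{v :: complex^('n + 'd). v $ Inr undefined = 0}"
  have "vec.subspace ?H"
    by (simp add: vec.subspace_def)
  moreover have "{segre_partial A 0 1 X i l | i l. i < 1} \<subseteq> ?H" for X
    by (auto simp: segre_partial_origin_1 simp del: One_nat_def)
  ultimately have "vec.span {segre_partial A 0 1 X i l | i l. i < 1} \<subseteq> ?H" for X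
    by (simp add: vec.span_minimal)
  moreover have "axis (Inr undefined) 1 \<notin> ?H"
    by simp
  ultimately show ?thesis
    unfolding segre_rank_eq_full_iff by blast
qed

lemma segre_partial_origin_2_fst:
  "segre_partial A 0 2 X 0 l = flat_pt (0, 2 *s row l (column_matrix A (X 1)))"
  by (rule segre_partial_eqI[where x = "X 1" and y = "2 *s (X 0 v* column_matrix A (X 1))"])
    (simp add: segre_map_origin_2 vector_matrix_left_distrib scalar_vector_matrix_assoc
      axis_vector_matrix_mult mult.commute)

lemma segre_partial_origin_2_snd:
  "segre_partial A 0 2 X 1 l = flat_pt (axis l 1, 2 *s (X 0 v* column_matrix A (axis l 1)))"
proof (rule segre_partial_eqI[where x = "X 1" and y = "2 *s (X 0 v* column_matrix A (X 1))"])
  interpret lin: Vector_Spaces.linear "(*s)" "(*s)" "\<lambda>V. X 0 v* column_matrix A V"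
    by (rule linear_vector_column_matrix)
  show "segre_map A 0 2 (X(1 := X 1 + t *s axis l 1)) =
      (X 1 + t *s axis l 1,
       2 *s (X 0 v* column_matrix A (X 1)) + t *s (2 *s (X 0 v* column_matrix A (axis l 1))))"
    for t
    by (simp add: segre_map_origin_2 lin.add lin.scale mult.commute)
qed

lemma segre_columns_origin_2:
  "{segre_partial A 0 2 X i l | i l. i < 2} =
    range (\<lambda>l. flat_pt (0, 2 *s row l (column_matrix A (X 1)))) \<union>
    range (\<lambda>l. flat_pt (axis l 1, 2 *s (X 0 v* column_matrix A (axis l 1))))"
proof -
  have "{segre_partial A 0 2 X i l | i l. i < 2} =
      range (segre_partial A 0 2 X 0) \<union> range (segre_partial A 0 2 X 1)"
    by (auto simp: less_2_cases_iff)
  then show ?thesis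
    by (simp add: segre_partial_origin_2_fst segre_partial_origin_2_snd del: One_nat_def)
qed

theorem lemma1p2:
  fixes A :: "'d::finite \<Rightarrow> complex^'n::finite^'n"
  assumes "\<forall>j. hermitian (A j)"
  shows "(finite_type_at A 0 \<and> segre_number A 0 = 2) \<longleftrightarrow>
         (\<exists>V :: complex^'n. rank ((\<chi> a. \<chi> j. (A j *v V) $ a) :: complex^'d^'n) = CARD('d))"
proof -
  have "(finite_type_at A 0 \<and> segre_number A 0 = 2) \<longleftrightarrow>
      segre_rank A 0 2 = CARD('n) + CARD('d)"
    using segre_rank_0_ne_full[of A 0] segre_rank_origin_1_ne_full[of A]
    by (simp add: finite_type_segre_number_eq_iff less_2_cases_iff)
  also have "\<dots> \<longleftrightarrow> (\<exists>X :: nat \<Rightarrow> complex^'n.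
      vec.span (range (\<lambda>l. 2 *s row l (column_matrix A (X 1)))) = UNIV)"
    unfolding segre_rank_eq_full_iff segre_columns_origin_2 span_shear_eq_UNIV_iff ..
  also have "\<dots> \<longleftrightarrow> (\<exists>V. vec.span (range (\<lambda>l. 2 *s row l (column_matrix A V))) = UNIV)"
    by (blast intro: exI[of _ "\<lambda>_. _"])
  also have "\<dots> \<longleftrightarrow> (\<exists>V. rank (column_matrix A V) = CARD('d))"
    unfolding span_range_scale[OF numeral_neq_zero] rank_eq_ncols_iff rows_eq_range_row ..
  finally show ?thesis
    unfolding column_matrix_def .
qed

end
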